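(* For every finite abelian group $A$, the wreath product $A\wr\mathbb{Z}=\left(\bigoplus_{i\in\mathbb{Z}}A\right)\rtimes\mathbb{Z}$ (with $\mathbb{Z}$ acting by shifting coordinates) embeds in $\mathrm{IET}$.
   Context: $\mathrm{IET}$ denotes the group of interval exchange transformations of $[0,1)$: bijections of $[0,1)$ that are orientation-preserving piecewise isometries (piecewise translations), left-continuous, with finitely many discontinuity points. *)

theory Defs
  imports Complex_Main "HOL-Algebra.Group"
begin

text \<open>Interval exchange transformations of [0,1), represented as functions real => real
  that are the identity outside [0,1) (so that composition and equality are well defined).
  f is an IET iff it is a bijection of [0,1) and there is a finite partition
  0 = x_0 < x_1 < ... < x_n = 1 such that f is a translation on each piece [x_i, x_(i+1)).\<close>

definition is_IET :: "(real \<Rightarrow> real) \<Rightarrow> bool" where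
  "is_IET f \<longleftrightarrow>
     bij_betw f {0..<1} {0..<1} \<and>
     (\<forall>x. x \<notin> {0..<1} \<longrightarrow> f x = x) \<and>
     (\<exists>xs :: real list. length xs \<ge> 2 \<and> sorted_wrt (<) xs \<and> hd xs = 0 \<and> last xs = 1 \<and>
        (\<forall>i < length xs - 1. \<exists>c. \<forall>x \<in> {xs ! i ..< xs ! (i+1)}. f x = x + c))"

definition IET_group :: "(real \<Rightarrow> real) monoid" where
  "IET_group = \<lparr>carrier = {f. is_IET f}, mult = (\<lambda>f g. f \<circ> g), one = id\<rparr>"

definition wreath_Z :: "('a, 'b) monoid_scheme \<Rightarrow> ((int \<Rightarrow> 'a) \<times> int) monoid" where
  "wreath_Z A = \<lparr>carrier = {(f, n). (\<forall>i. f i \<in> carrier A) \<and> finite {i. f i \<noteq> \<one>\<^bsub>A\<^esub>}},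
     mult = (\<lambda>(f, n) (g, m). (\<lambda>i. f i \<otimes>\<^bsub>A\<^esub> g (i - n), n + m)),
     one = (\<lambda>i. \<one>\<^bsub>A\<^esub>, 0)\<rparr>"

end

theory Submission
  imports Defs "HOL-Algebra.FiniteProduct" "HOL-Analysis.Continuum_Not_Denumerable"
begin

text \<open>
  Fix an irrational \<alpha> and let N be the order of A. Cutting [0,1) into the N cells
  [j/N, (j+1)/N) and numbering A by the cells, a point x becomes a pair (a, t) of a label
  a \<in> A and a circle point t = frac (N x). The element (f, n) acts by the skew product
  (a, t) \<mapsto> (\<phi> f (t + n\<alpha>) \<cdot> a, frac (t + n\<alpha>)) over the rotation by n\<alpha>, where \<phi> f z is the
  product of those f i for which z - i\<alpha> lies in [0, 1/2) mod 1. Since A is abelian, \<phi> satisfies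
  the cocycle identity \<phi> (f \<cdot> g(_ - n)) z = \<phi> f z \<cdot> \<phi> g (z - n\<alpha>), so this is an action of the
  wreath product. Each map is a translation between the finitely many points where the cell, the
  rotated circle point or one of the windows [i\<alpha>, i\<alpha> + 1/2) jumps, hence an IET. Irrationality of
  \<alpha> recovers n from the rotation, and lets one cross the boundary of a single window without
  crossing any other, which recovers each value f i from \<phi> f.
\<close>

lemma ex_irrational: "\<exists>\<alpha>::real. \<alpha> \<notin> \<rat>"
proof -
  have "\<rat> \<noteq> (UNIV :: real set)"
    using countable_rat[where 'a=real] uncountable_UNIV_real by auto
  then show ?thesis by auto
qed

lemma of_int_mult_irrational_notin_Ints:
  fixes \<alpha> :: real
  assumes "\<alpha> \<notin> \<rat>" and "k \<noteq> 0"
  shows "of_int k * \<alpha> \<notin> \<int>"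
proof
  assume "of_int k * \<alpha> \<in> \<int>"
  then have "of_int k * \<alpha> / of_int k \<in> \<rat>"
    by (intro Rats_divide) (auto intro: Ints_subset_Rats[THEN subsetD])
  then show False using assms by simp
qed

lemma frac_of_int_mult_irrational:
  fixes \<alpha> :: real
  assumes "\<alpha> \<notin> \<rat>" and "k \<noteq> 0"
  shows "frac (of_int k * \<alpha>) \<noteq> 0" and "frac (of_int k * \<alpha>) \<noteq> 1/2"
proof -
  show "frac (of_int k * \<alpha>) \<noteq> 0"
    using of_int_mult_irrational_notin_Ints[OF assms] by simp
  show "frac (of_int k * \<alpha>) \<noteq> 1/2"
  proof
    assume "frac (of_int k * \<alpha>) = 1/2"
    then have "of_int (2 * k) * \<alpha> = of_int (2 * \<lfloor>of_int k * \<alpha>\<rfloor> + 1)"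
      by (simp add: frac_def algebra_simps)
    then have "of_int (2 * k) * \<alpha> \<in> \<int>" by (metis Ints_of_int)
    moreover have "of_int (2 * k) * \<alpha> \<notin> \<int>"
      using assms by (intro of_int_mult_irrational_notin_Ints) auto
    ultimately show False by blast
  qed
qed

lemma floor_double: "\<lfloor>2 * w\<rfloor> = 2 * \<lfloor>w\<rfloor> + (if frac w < 1/2 then 0 else 1)" for w :: real
proof -
  have "2 * w = of_int (2 * \<lfloor>w\<rfloor>) + 2 * frac w" by (simp add: frac_def)
  then have "\<lfloor>2 * w\<rfloor> = 2 * \<lfloor>w\<rfloor> + \<lfloor>2 * frac w\<rfloor>" by (metis add.commute floor_add_int)
  moreover have "\<lfloor>2 * frac w\<rfloor> = (if frac w < 1/2 then 0 else 1)"
    using frac_ge_0[of w] frac_lt_1[of w] by (auto simp: floor_eq_iff)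
  ultimately show ?thesis by simp
qed

lemma floor_eq_floor_double_div_2: "\<lfloor>w\<rfloor> = \<lfloor>2 * w\<rfloor> div 2" for w :: real
  using floor_double[of w] by simp

lemma frac_less_half_iff_even: "frac w < 1/2 \<longleftrightarrow> even \<lfloor>2 * w\<rfloor>" for w :: real
  using floor_double[of w] by simp

lemma floor_constant_on_interval:
  fixes M a b c x :: real
  assumes "M > 0" and "a \<le> x" "x < b" and no_int: "\<And>y. a < y \<Longrightarrow> y < b \<Longrightarrow> M * y + c \<notin> \<int>"
  shows "\<lfloor>M * x + c\<rfloor> = \<lfloor>M * a + c\<rfloor>"
proof (rule ccontr)
  assume ne: "\<lfloor>M * x + c\<rfloor> \<noteq> \<lfloor>M * a + c\<rfloor>"
  define K where "K = \<lfloor>M * x + c\<rfloor>"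
  have "\<lfloor>M * a + c\<rfloor> \<le> K"
    unfolding K_def using assms by (intro floor_mono) simp
  then have "M * a + c < of_int K" using ne unfolding K_def by (metis floor_less_iff less_le)
  moreover have "of_int K \<le> M * x + c" unfolding K_def by simp
  ultimately have "a < (of_int K - c) / M" "(of_int K - c) / M \<le> x"
    using \<open>M > 0\<close> by (simp_all add: field_simps)
  then have "a < (of_int K - c) / M" "(of_int K - c) / M < b" using \<open>x < b\<close> by simp_all
  moreover have "M * ((of_int K - c) / M) + c \<in> \<int>" using \<open>M > 0\<close> by simp
  ultimately show False using no_int by blast
qed

lemma floor_and_half_constant_on_interval:
  fixes M a b c x w w' :: real
  assumes "M > 0" and "a \<le> x" "x < b" and "\<And>y. a < y \<Longrightarrow> y < b \<Longrightarrow> M * y + c \<notin> \<int>"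
    and "2 * w = M * x + c" "2 * w' = M * a + c"
  shows "\<lfloor>w\<rfloor> = \<lfloor>w'\<rfloor> \<and> (frac w < 1/2 \<longleftrightarrow> frac w' < 1/2)"
  unfolding floor_eq_floor_double_div_2[of w] floor_eq_floor_double_div_2[of w'] frac_less_half_iff_even
  using floor_constant_on_interval[OF assms(1-4)] assms(5,6) by simp

lemma finite_affine_preimage_Ints:
  fixes M c :: real
  assumes "M > 0"
  shows "finite {y. 0 \<le> y \<and> y \<le> 1 \<and> M * y + c \<in> \<int>}"
proof (rule finite_subset)
  show "{y. 0 \<le> y \<and> y \<le> 1 \<and> M * y + c \<in> \<int>} \<subseteq> (\<lambda>k. (of_int k - c) / M) ` {\<lfloor>c\<rfloor>..\<lceil>M + c\<rceil>}"
  proof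
    fix y assume "y \<in> {y. 0 \<le> y \<and> y \<le> 1 \<and> M * y + c \<in> \<int>}"
    then obtain k where y: "0 \<le> y" "y \<le> 1" and k: "M * y + c = of_int k"
      by (auto elim: Ints_cases)
    have "0 \<le> M * y" "M * y \<le> M" using y assms by auto
    then have "\<lfloor>c\<rfloor> \<le> k" "k \<le> \<lceil>M + c\<rceil>" using k by linarith+
    moreover have "y = (of_int k - c) / M" using k assms by (simp add: field_simps)
    ultimately show "y \<in> (\<lambda>k. (of_int k - c) / M) ` {\<lfloor>c\<rfloor>..\<lceil>M + c\<rceil>}" by auto
  qed
qed simp

lemma frac_add_small: "0 \<le> frac u + e \<Longrightarrow> frac u + e < 1 \<Longrightarrow> frac (u + e) = frac u + e"
  by (subst frac_unique_iff) (simp add: frac_def)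

lemma frac_half_stable:
  fixes u e :: real
  assumes "0 < e" "e < frac u" "e < 1 - frac u" "e < \<bar>frac u - 1/2\<bar>"
  shows "frac (u + e) < 1/2 \<longleftrightarrow> frac (u - e) < 1/2"
  using frac_add_small[of u e] frac_add_small[of u "- e"] assms by (auto simp: abs_if split: if_splits)

lemma finite_positive_lower_bound:
  fixes X :: "real set"
  assumes "finite X" "\<And>x. x \<in> X \<Longrightarrow> 0 < x"
  shows "\<exists>e>0. \<forall>x\<in>X. e < x"
proof -
  have "0 < Min (insert 1 X)" using assms by (subst Min_gr_iff) auto
  moreover have "Min (insert 1 X) \<le> x" if "x \<in> X" for x using assms that by simp
  ultimately show ?thesis by (intro exI[of _ "Min (insert 1 X) / 2"]) force
qed

definition piecewise_translation :: "(real \<Rightarrow> real) \<Rightarrow> bool" where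
  "piecewise_translation f \<longleftrightarrow>
     (\<exists>xs :: real list. length xs \<ge> 2 \<and> sorted_wrt (<) xs \<and> hd xs = 0 \<and> last xs = 1 \<and>
        (\<forall>i < length xs - 1. \<exists>c. \<forall>x \<in> {xs ! i ..< xs ! (i+1)}. f x = x + c))"

lemma is_IET_iff:
  "is_IET f \<longleftrightarrow> bij_betw f {0..<1} {0..<1} \<and> (\<forall>x. x \<notin> {0..<1} \<longrightarrow> f x = x) \<and> piecewise_translation f"
  unfolding is_IET_def piecewise_translation_def ..

lemma sorted_wrt_less_gap:
  fixes xs :: "'a::linorder list"
  assumes "sorted_wrt (<) xs" "Suc i < length xs" "xs ! i < y" "y < xs ! Suc i"
  shows "y \<notin> set xs"
proof
  assume "y \<in> set xs"
  then obtain j where j: "j < length xs" "xs ! j = y" by (metis in_set_conv_nth)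
  have "sorted xs" using assms(1) by (rule strict_sorted_imp_sorted)
  then have "xs ! j \<le> xs ! i \<or> xs ! Suc i \<le> xs ! j"
    using j assms(2) by (metis not_less_eq_eq sorted_nth_mono Suc_lessD)
  then show False using assms j by auto
qed

lemma hd_last_sorted_list_of_set:
  fixes S :: "'a::linorder set"
  assumes "finite S" "a \<in> S" "b \<in> S" "S \<subseteq> {a..b}"
  shows "hd (sorted_list_of_set S) = a" "last (sorted_list_of_set S) = b"
proof -
  define xs where "xs = sorted_list_of_set S"
  have set_xs: "set xs = S" and "sorted xs" unfolding xs_def using assms(1) by simp_all
  have "Min S = a" using assms by (intro Min_eqI) auto
  moreover have "S \<noteq> {}" using assms(2) by blast
  ultimately show "hd (sorted_list_of_set S) = a" by (simp add: sorted_list_of_set_nonempty[OF assms(1)])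
  have "b \<in> set xs" using set_xs assms(3) by simp
  then obtain i where i: "i < length xs" "xs ! i = b" by (auto simp: in_set_conv_nth)
  have "i \<le> length xs - 1" "length xs - 1 < length xs" using i(1) by auto
  then have "b \<le> xs ! (length xs - 1)" unfolding i(2)[symmetric] by (rule sorted_nth_mono[OF \<open>sorted xs\<close>])
  moreover have "xs \<noteq> []" using i by auto
  then have "last xs \<in> S" using last_in_set set_xs by blast
  then have "last xs \<le> b" using assms(4) by auto
  ultimately show "last (sorted_list_of_set S) = b"
    unfolding xs_def[symmetric] using last_conv_nth[OF \<open>xs \<noteq> []\<close>] by simp
qed

lemma piecewise_translationI:
  fixes f :: "real \<Rightarrow> real"
  assumes "finite D"
    and translation: "\<And>a b. 0 \<le> a \<Longrightarrow> a < b \<Longrightarrow> b \<le> 1 \<Longrightarrow> {a<..<b} \<inter> D = {} \<Longrightarrow>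
          \<exists>c. \<forall>x\<in>{a..<b}. f x = x + c"
  shows "piecewise_translation f"
proof -
  define S where "S = {0, 1} \<union> (D \<inter> {0..1})"
  define xs where "xs = sorted_list_of_set S"
  have "finite S" using assms unfolding S_def by simp
  then have set_xs: "set xs = S" and sorted_xs: "sorted_wrt (<) xs" and len: "length xs = card S"
    unfolding xs_def by simp_all
  have "card {0::real, 1} \<le> card S" using \<open>finite S\<close> by (intro card_mono) (auto simp: S_def)
  then have "length xs \<ge> 2" using len by simp
  moreover have "hd xs = 0" "last xs = 1"
    unfolding xs_def using hd_last_sorted_list_of_set[OF \<open>finite S\<close>, of 0 1] by (auto simp: S_def)
  moreover have "\<exists>c. \<forall>x \<in> {xs ! i ..< xs ! (i+1)}. f x = x + c" if i: "i < length xs - 1" for i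
  proof (rule translation)
    have "xs ! i \<in> S" "xs ! (i + 1) \<in> S" using i set_xs nth_mem[of i xs] nth_mem[of "i + 1" xs] by auto
    then show bounds: "0 \<le> xs ! i" "xs ! (i + 1) \<le> 1" unfolding S_def by auto
    show "xs ! i < xs ! (i + 1)" using i sorted_xs by (simp add: sorted_wrt_iff_nth_less)
    show "{xs ! i<..<xs ! (i + 1)} \<inter> D = {}"
    proof (intro equalityI subsetI)
      fix y assume y: "y \<in> {xs ! i<..<xs ! (i + 1)} \<inter> D"
      then have "y \<in> set xs" using bounds set_xs S_def by auto
      moreover have "y \<notin> set xs" using y i by (intro sorted_wrt_less_gap[OF sorted_xs, of i]) auto
      ultimately show "y \<in> {}" by simp
    qed simp
  qed
  ultimately show ?thesis unfolding piecewise_translation_def using sorted_xs by blast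
qed

locale IET_wreath = comm_group G for G (structure) +
  fixes \<alpha> :: real
  assumes finite_carrier: "finite (carrier G)"
    and irrational: "\<alpha> \<notin> \<rat>"
begin

abbreviation N :: real where "N \<equiv> real (card (carrier G))"

definition elem :: "nat \<Rightarrow> 'a" where
  "elem = (SOME e. bij_betw e {0..<card (carrier G)} (carrier G))"

definition index :: "'a \<Rightarrow> nat" where
  "index = inv_into {0..<card (carrier G)} elem"

definition supp :: "(int \<Rightarrow> 'a) \<Rightarrow> int set" where
  "supp f = {i. f i \<noteq> \<one>}"

definition in_window :: "real \<Rightarrow> int \<Rightarrow> bool" where
  "in_window z i \<longleftrightarrow> frac (z - of_int i * \<alpha>) < 1/2"

definition cocycle :: "(int \<Rightarrow> 'a) \<Rightarrow> real \<Rightarrow> 'a" where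
  "cocycle f z = (\<Otimes>i\<in>supp f. if in_window z i then f i else \<one>)"

definition cell_point :: "nat \<Rightarrow> real \<Rightarrow> real" where
  "cell_point j t = (real j + t) / N"

definition skew :: "(int \<Rightarrow> 'a) \<times> int \<Rightarrow> real \<Rightarrow> real" where
  "skew p x = (if x \<in> {0..<1} then
     cell_point (index (cocycle (fst p) (N * x + of_int (snd p) * \<alpha>) \<otimes> elem (nat \<lfloor>N * x\<rfloor>)))
       (frac (N * x + of_int (snd p) * \<alpha>))
   else x)"

lemma card_carrier_pos: "card (carrier G) > 0"
  using finite_carrier one_closed card_gt_0_iff by blast

lemma elem_bij: "bij_betw elem {0..<card (carrier G)} (carrier G)"
proof -
  have "\<exists>e. bij_betw e {0..<card (carrier G)} (carrier G)"
    using finite_carrier ex_bij_betw_nat_finite by blast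
  then show ?thesis unfolding elem_def by (rule someI_ex)
qed

lemma elem_closed: "j < card (carrier G) \<Longrightarrow> elem j \<in> carrier G"
  using elem_bij bij_betwE by fastforce

lemma index_less: "a \<in> carrier G \<Longrightarrow> index a < card (carrier G)"
  unfolding index_def using elem_bij by (metis atLeastLessThan_iff bij_betw_def inv_into_into)

lemma elem_index: "a \<in> carrier G \<Longrightarrow> elem (index a) = a"
  unfolding index_def using elem_bij by (metis bij_betw_def f_inv_into_f)

lemma index_elem: "j < card (carrier G) \<Longrightarrow> index (elem j) = j"
  unfolding index_def using elem_bij by (simp add: bij_betw_def)

lemma cell_point_in_unit:
  assumes "j < card (carrier G)" "0 \<le> t" "t < 1"
  shows "cell_point j t \<in> {0..<1}"
proof -
  have "real (Suc j) \<le> N" using assms(1) by (simp only: of_nat_le_iff Suc_le_eq)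
  then have "0 \<le> real j + t" "real j + t < N" using assms(2,3) by simp_all
  then show ?thesis unfolding cell_point_def by simp
qed

lemma scaled_cell_point: "N * cell_point j t = real j + t"
  unfolding cell_point_def using card_carrier_pos by simp

lemma cell_of_cell_point: "0 \<le> t \<Longrightarrow> t < 1 \<Longrightarrow> nat \<lfloor>N * cell_point j t\<rfloor> = j"
  unfolding scaled_cell_point using floor_eq_iff[of t 0] by simp

lemma cell_point_inj:
  assumes "0 \<le> t" "t < 1" "0 \<le> t'" "t' < 1" and eq: "cell_point j t = cell_point j' t'"
  shows "j = j' \<and> t = t'"
proof -
  have "j = j'" using cell_of_cell_point[of t j] cell_of_cell_point[of t' j'] assms by simp
  moreover have "real j + t = real j' + t'" using scaled_cell_point[of j t] scaled_cell_point[of j' t'] eq by simp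
  ultimately show ?thesis by simp
qed

lemma cell_less:
  assumes "x \<in> {0..<1}"
  shows "nat \<lfloor>N * x\<rfloor> < card (carrier G)"
proof -
  have "0 \<le> N * x" "N * x < N" using assms card_carrier_pos by simp_all
  then have "0 \<le> \<lfloor>N * x\<rfloor>" "\<lfloor>N * x\<rfloor> < int (card (carrier G))" by (simp_all add: floor_less_iff)
  then show ?thesis by (simp add: nat_less_iff)
qed

lemma cell_point_decompose: "x \<in> {0..<1} \<Longrightarrow> cell_point (nat \<lfloor>N * x\<rfloor>) (frac (N * x)) = x"
  unfolding cell_point_def using card_carrier_pos by (simp add: frac_def)

lemma cocycle_closed: "(\<And>i. f i \<in> carrier G) \<Longrightarrow> cocycle f z \<in> carrier G"
  unfolding cocycle_def by (rule finprod_closed) auto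

lemma cocycle_eq_finprod_superset:
  assumes "finite S" "supp f \<subseteq> S" "\<And>i. f i \<in> carrier G"
  shows "cocycle f z = (\<Otimes>i\<in>S. if in_window z i then f i else \<one>)"
  unfolding cocycle_def
  by (rule finprod_mono_neutral_cong_left) (use assms in \<open>auto simp: supp_def\<close>)

lemma cocycle_cong_window:
  assumes "\<And>i. f i \<in> carrier G" and "\<And>i. i \<in> supp f \<Longrightarrow> in_window z i \<longleftrightarrow> in_window z' i"
  shows "cocycle f z = cocycle f z'"
  unfolding cocycle_def by (rule finprod_cong) (use assms in \<open>auto simp: simp_implies_def\<close>)

lemma cocycle_periodic:
  assumes "\<And>i. f i \<in> carrier G" and "z' - z \<in> \<int>"
  shows "cocycle f z' = cocycle f z"
proof (rule cocycle_cong_window[OF assms(1)])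
  fix i
  have "frac (z' - of_int i * \<alpha>) = frac ((z - of_int i * \<alpha>) + (z' - z))" by simp
  also have "\<dots> = frac (z - of_int i * \<alpha>)" using assms(2) by (rule frac_add_int_right)
  finally show "in_window z' i \<longleftrightarrow> in_window z i" unfolding in_window_def by simp
qed

lemma cocycle_one: "cocycle (\<lambda>i. \<one>) z = \<one>"
  unfolding cocycle_def supp_def by simp

lemma cocycle_shift_mult:
  assumes f: "\<And>i. f i \<in> carrier G" and g: "\<And>i. g i \<in> carrier G"
    and "finite (supp f)" "finite (supp g)"
  shows "cocycle (\<lambda>i. f i \<otimes> g (i - n)) z = cocycle f z \<otimes> cocycle g (z - of_int n * \<alpha>)"
proof -
  define T where "T = supp g \<union> (\<lambda>i. i - n) ` supp f"
  define S where "S = (\<lambda>k. k + n) ` T"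
  have "finite T" "finite S" using assms unfolding S_def T_def by simp_all
  have supp_f: "supp f \<subseteq> S" unfolding S_def T_def by (force simp: image_iff)
  have supp_g: "supp g \<subseteq> T" unfolding T_def by auto
  have supp_fg: "supp (\<lambda>i. f i \<otimes> g (i - n)) \<subseteq> S"
  proof
    fix i assume "i \<in> supp (\<lambda>i. f i \<otimes> g (i - n))"
    then have "i \<in> supp f \<or> i - n \<in> supp g" unfolding supp_def using f g by auto
    then show "i \<in> S" using supp_f unfolding S_def T_def by (force simp: image_iff)
  qed
  have "cocycle (\<lambda>i. f i \<otimes> g (i - n)) z = (\<Otimes>i\<in>S. if in_window z i then f i \<otimes> g (i - n) else \<one>)"
    by (rule cocycle_eq_finprod_superset[OF \<open>finite S\<close> supp_fg]) (use f g in auto)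
  also have "\<dots> = (\<Otimes>i\<in>S. (if in_window z i then f i else \<one>) \<otimes> (if in_window z i then g (i - n) else \<one>))"
    by (rule finprod_cong) (use f g in \<open>auto simp: simp_implies_def\<close>)
  also have "\<dots> = (\<Otimes>i\<in>S. if in_window z i then f i else \<one>) \<otimes> (\<Otimes>i\<in>S. if in_window z i then g (i - n) else \<one>)"
    by (rule finprod_multf) (use f g in auto)
  also have "(\<Otimes>i\<in>S. if in_window z i then f i else \<one>) = cocycle f z"
    by (rule cocycle_eq_finprod_superset[symmetric, OF \<open>finite S\<close> supp_f f])
  also have "(\<Otimes>i\<in>S. if in_window z i then g (i - n) else \<one>)
      = (\<Otimes>k\<in>T. if in_window (z - of_int n * \<alpha>) k then g k else \<one>)"
    unfolding S_def
  proof (subst finprod_reindex)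
    show "(\<Otimes>k\<in>T. if in_window z (k + n) then g (k + n - n) else \<one>)
        = (\<Otimes>k\<in>T. if in_window (z - of_int n * \<alpha>) k then g k else \<one>)"
      by (rule finprod_cong) (use g in \<open>auto simp: in_window_def algebra_simps simp_implies_def\<close>)
  qed (use g in \<open>auto simp: inj_on_def\<close>)
  also have "\<dots> = cocycle g (z - of_int n * \<alpha>)"
    by (rule cocycle_eq_finprod_superset[symmetric, OF \<open>finite T\<close> supp_g g])
  finally show ?thesis .
qed

lemma cocycle_jump:
  assumes f: "\<And>i. f i \<in> carrier G" and "finite (supp f)"
    and "in_window z k" "\<not> in_window z' k"
    and same: "\<And>i. i \<in> supp f \<Longrightarrow> i \<noteq> k \<Longrightarrow> in_window z i \<longleftrightarrow> in_window z' i"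
  shows "cocycle f z = f k \<otimes> cocycle f z'"
proof -
  define S where "S = supp f - {k}"
  define R where "R w = (\<Otimes>i\<in>S. if in_window w i then f i else \<one>)" for w
  have "finite S" using assms(2) unfolding S_def by simp
  have split: "cocycle f w = (if in_window w k then f k else \<one>) \<otimes> R w" for w
  proof -
    have "cocycle f w = (\<Otimes>i\<in>insert k S. if in_window w i then f i else \<one>)"
      by (rule cocycle_eq_finprod_superset) (use \<open>finite S\<close> f in \<open>auto simp: S_def\<close>)
    also have "\<dots> = (if in_window w k then f k else \<one>) \<otimes> R w"
      unfolding R_def by (rule finprod_insert) (use \<open>finite S\<close> f in \<open>auto simp: S_def\<close>)
    finally show ?thesis .
  qed
  have "R z = R z'"
    unfolding R_def by (rule finprod_cong) (use same f in \<open>auto simp: S_def simp_implies_def\<close>)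
  moreover have "R z' \<in> carrier G" unfolding R_def by (rule finprod_closed) (use f in auto)
  ultimately show ?thesis using split[of z] split[of z'] assms(3,4) by simp
qed

text \<open>
  The points k\<alpha> \<plusminus> e lie on either side of the left end of the window of k, and for small e no
  end i\<alpha> or i\<alpha> + 1/2 of another window separates them.
\<close>

lemma window_separation:
  assumes "finite S" "k \<notin> S"
  obtains z z' where "in_window z k" "\<not> in_window z' k"
    and "\<And>i. i \<in> S \<Longrightarrow> in_window z i \<longleftrightarrow> in_window z' i"
proof -
  define d where "d i = frac (of_int (k - i) * \<alpha>)" for i
  define margin where "margin i = min (d i) (min (1 - d i) \<bar>d i - 1/2\<bar>)" for i
  have margin_pos: "0 < margin i" if "i \<in> S" for i
  proof -
    have "k - i \<noteq> 0" using that assms(2) by auto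
    then have "d i \<noteq> 0" "d i \<noteq> 1/2" "0 \<le> d i" "d i < 1"
      using frac_of_int_mult_irrational[OF irrational \<open>k - i \<noteq> 0\<close>] unfolding d_def by (auto simp: frac_lt_1)
    then show ?thesis unfolding margin_def by auto
  qed
  have "\<exists>e>0. \<forall>x\<in>insert (1/4) (margin ` S). e < x"
    by (rule finite_positive_lower_bound) (use assms(1) margin_pos in auto)
  then obtain e where "0 < e" "e < 1/4" and e: "\<And>i. i \<in> S \<Longrightarrow> e < margin i" by auto
  have frac_e: "frac e = e" using \<open>0 < e\<close> \<open>e < 1/4\<close> by (simp add: frac_eq)
  then have "e \<notin> \<int>" using \<open>0 < e\<close> frac_gt_0_iff by metis
  then have frac_minus_e: "frac (- e) = 1 - e" using frac_e by (simp add: frac_neg)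
  show ?thesis
  proof
    show "in_window (of_int k * \<alpha> + e) k" unfolding in_window_def using frac_e \<open>e < 1/4\<close> by simp
    show "\<not> in_window (of_int k * \<alpha> - e) k" unfolding in_window_def using frac_minus_e \<open>e < 1/4\<close> by simp
    show "in_window (of_int k * \<alpha> + e) i \<longleftrightarrow> in_window (of_int k * \<alpha> - e) i" if "i \<in> S" for i
    proof -
      have "e < d i" "e < 1 - d i" "e < \<bar>d i - 1/2\<bar>" using e[OF that] unfolding margin_def by auto
      then have "frac (of_int (k - i) * \<alpha> + e) < 1/2 \<longleftrightarrow> frac (of_int (k - i) * \<alpha> - e) < 1/2"
        using \<open>0 < e\<close> unfolding d_def by (rule frac_half_stable[rotated])
      then show ?thesis unfolding in_window_def by (simp add: algebra_simps)
    qed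
  qed
qed

lemma cocycle_inj:
  assumes f: "\<And>i. f i \<in> carrier G" and g: "\<And>i. g i \<in> carrier G"
    and "finite (supp f)" "finite (supp g)"
    and eq: "\<And>z. cocycle f z = cocycle g z"
  shows "f = g"
proof
  fix k
  obtain z z' where "in_window z k" "\<not> in_window z' k"
    and same: "\<And>i. i \<in> supp f \<union> supp g - {k} \<Longrightarrow> in_window z i \<longleftrightarrow> in_window z' i"
    using window_separation[of "supp f \<union> supp g - {k}" k] assms(3,4) by auto
  then have "f k \<otimes> cocycle f z' = g k \<otimes> cocycle g z'"
    using cocycle_jump[OF f assms(3)] cocycle_jump[OF g assms(4)] eq by (metis DiffI UnI1 UnI2 singletonD)
  then show "f k = g k" using eq[of z'] f[of k] g[of k] cocycle_closed[of g z', OF g] by simp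
qed

lemma skew_outside:
  assumes "x \<notin> {0..<1}"
  shows "skew p x = x"
  unfolding skew_def if_not_P[OF assms] ..

lemma skew_in_unit:
  assumes f: "\<And>i. f i \<in> carrier G" and x: "x \<in> {0..<1}"
  shows "skew (f, n) x \<in> {0..<1}"
proof -
  have "cocycle f (N * x + of_int n * \<alpha>) \<otimes> elem (nat \<lfloor>N * x\<rfloor>) \<in> carrier G"
    using cocycle_closed[of f, OF f] elem_closed[OF cell_less[OF x]] by simp
  then show ?thesis
    unfolding skew_def if_P[OF x] fst_conv snd_conv
    by (intro cell_point_in_unit index_less) (simp_all add: frac_lt_1)
qed

lemma skew_cell_point:
  assumes f: "\<And>i. f i \<in> carrier G" and "j < card (carrier G)" "0 \<le> t" "t < 1"
  shows "skew (f, n) (cell_point j t) =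
    cell_point (index (cocycle f (t + of_int n * \<alpha>) \<otimes> elem j)) (frac (t + of_int n * \<alpha>))"
proof -
  have z: "N * cell_point j t + of_int n * \<alpha> = (t + of_int n * \<alpha>) + of_int (int j)"
    by (simp add: scaled_cell_point)
  have "cocycle f (N * cell_point j t + of_int n * \<alpha>) = cocycle f (t + of_int n * \<alpha>)"
    by (rule cocycle_periodic[OF f]) (simp add: z)
  then show ?thesis
    unfolding skew_def if_P[OF cell_point_in_unit[OF assms(2-4)]] cell_of_cell_point[OF assms(3,4)]
    by (simp only: z frac_add_of_int_right fst_conv snd_conv)
qed

lemma skew_one: "skew (\<lambda>i. \<one>, 0) x = x"
proof (cases "x \<in> {0..<1}")
  case True
  then have "skew (\<lambda>i. \<one>, 0) (cell_point (nat \<lfloor>N * x\<rfloor>) (frac (N * x))) = cell_point (nat \<lfloor>N * x\<rfloor>) (frac (N * x))"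
    by (simp add: skew_cell_point cell_less frac_lt_1 cocycle_one elem_closed index_elem)
  then show ?thesis using cell_point_decompose[OF True] by simp
qed (rule skew_outside)

lemma skew_mult:
  assumes f: "\<And>i. f i \<in> carrier G" and g: "\<And>i. g i \<in> carrier G"
    and "finite (supp f)" "finite (supp g)"
  shows "skew (\<lambda>i. f i \<otimes> g (i - n), n + m) x = skew (f, n) (skew (g, m) x)"
proof (cases "x \<in> {0..<1}")
  case True
  define j where "j = nat \<lfloor>N * x\<rfloor>"
  define t where "t = frac (N * x)"
  define a where "a = cocycle g (t + of_int m * \<alpha>) \<otimes> elem j"
  define t' where "t' = t + of_int (n + m) * \<alpha>"
  have j: "j < card (carrier G)" and t: "0 \<le> t" "t < 1" and x: "x = cell_point j t"
    using cell_less[OF True] cell_point_decompose[OF True] unfolding j_def t_def by (simp_all add: frac_lt_1)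
  have a: "a \<in> carrier G" unfolding a_def using cocycle_closed[of g, OF g] elem_closed[OF j] by simp
  have fg: "\<And>i. f i \<otimes> g (i - n) \<in> carrier G" using f g by simp
  have shift: "frac (t + of_int m * \<alpha>) + of_int n * \<alpha> - t' \<in> \<int>"
    unfolding t'_def by (simp add: frac_def algebra_simps)
  have "skew (g, m) x = cell_point (index a) (frac (t + of_int m * \<alpha>))"
    unfolding x a_def by (rule skew_cell_point[of g, OF g j t])
  then have "skew (f, n) (skew (g, m) x) =
      cell_point (index (cocycle f (frac (t + of_int m * \<alpha>) + of_int n * \<alpha>) \<otimes> elem (index a)))
        (frac (frac (t + of_int m * \<alpha>) + of_int n * \<alpha>))"
    using skew_cell_point[of f, OF f index_less[OF a] frac_ge_0 frac_lt_1] by simp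
  also have "\<dots> = cell_point (index (cocycle f t' \<otimes> a)) (frac t')"
    using cocycle_periodic[of f, OF f shift] elem_index[OF a] unfolding t'_def by (simp add: algebra_simps)
  also have "cocycle f t' \<otimes> a = cocycle (\<lambda>i. f i \<otimes> g (i - n)) t' \<otimes> elem j"
    using cocycle_shift_mult[OF assms, of n t'] cocycle_closed[of f, OF f] cocycle_closed[of g, OF g] elem_closed[OF j]
    unfolding a_def t'_def by (simp add: m_assoc algebra_simps)
  also have "cell_point (index \<dots>) (frac t') = skew (\<lambda>i. f i \<otimes> g (i - n), n + m) x"
    unfolding x t'_def by (rule skew_cell_point[of "\<lambda>i. f i \<otimes> g (i - n)", OF fg j t, symmetric])
  finally show ?thesis ..
qed (simp add: skew_outside)

text \<open>
  With d = 0, d = n\<alpha> and d = (n - i)\<alpha>, the value N y + d tracks the cell, the rotated circle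
  point and the window of i. Doubling makes \<lfloor>2 (N y + d)\<rfloor> jump both where \<lfloor>N y + d\<rfloor> jumps and
  where frac (N y + d) crosses 1/2.
\<close>

definition shifts :: "(int \<Rightarrow> 'a) \<Rightarrow> int \<Rightarrow> real set" where
  "shifts f n = insert 0 ((\<lambda>i. of_int (n - i) * \<alpha>) ` insert 0 (supp f))"

definition breakpoints :: "(int \<Rightarrow> 'a) \<Rightarrow> int \<Rightarrow> real set" where
  "breakpoints f n = {y. 0 \<le> y \<and> y \<le> 1 \<and> (\<exists>d\<in>shifts f n. 2 * N * y + 2 * d \<in> \<int>)}"

lemma finite_breakpoints:
  assumes "finite (supp f)"
  shows "finite (breakpoints f n)"
proof -
  have "breakpoints f n = (\<Union>d\<in>shifts f n. {y. 0 \<le> y \<and> y \<le> 1 \<and> 2 * N * y + 2 * d \<in> \<int>})"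
    unfolding breakpoints_def by blast
  moreover have "finite (shifts f n)" using assms unfolding shifts_def by simp
  ultimately show ?thesis using card_carrier_pos by (simp add: finite_affine_preimage_Ints)
qed

lemma skew_translation_between_breakpoints:
  assumes f: "\<And>i. f i \<in> carrier G" and "0 \<le> a" "b \<le> 1"
    and gap: "{a<..<b} \<inter> breakpoints f n = {}"
  shows "\<exists>c. \<forall>x\<in>{a..<b}. skew (f, n) x = x + c"
proof -
  have const: "\<lfloor>N * x + d\<rfloor> = \<lfloor>N * a + d\<rfloor> \<and> (frac (N * x + d) < 1/2 \<longleftrightarrow> frac (N * a + d) < 1/2)"
    if x: "x \<in> {a..<b}" and d: "d \<in> shifts f n" for x d
  proof (rule floor_and_half_constant_on_interval[where M = "2 * N" and c = "2 * d"])
    show "2 * N * y + 2 * d \<notin> \<int>" if "a < y" "y < b" for y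
      using gap that d assms(2,3) unfolding breakpoints_def by auto
  qed (use x card_carrier_pos in \<open>auto simp: algebra_simps\<close>)
  have shifts: "0 \<in> shifts f n" "of_int n * \<alpha> \<in> shifts f n"
    "\<And>i. i \<in> supp f \<Longrightarrow> of_int (n - i) * \<alpha> \<in> shifts f n"
    unfolding shifts_def by force+
  define z where "z x = N * x + of_int n * \<alpha>" for x
  define E where "E = index (cocycle f (z a) \<otimes> elem (nat \<lfloor>N * a\<rfloor>))"
  show ?thesis
  proof (intro exI ballI)
    fix x assume x: "x \<in> {a..<b}"
    then have x01: "x \<in> {0..<1}" using assms(2,3) by auto
    have floor_z: "\<lfloor>z x\<rfloor> = \<lfloor>z a\<rfloor>" using const[OF x shifts(2)] unfolding z_def by simp
    have "\<lfloor>N * x\<rfloor> = \<lfloor>N * a\<rfloor>" using const[OF x shifts(1)] by simp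
    moreover have "cocycle f (z x) = cocycle f (z a)"
    proof (rule cocycle_cong_window[of f, OF f])
      fix i assume "i \<in> supp f"
      then show "in_window (z x) i \<longleftrightarrow> in_window (z a) i"
        using const[OF x shifts(3)] unfolding in_window_def z_def by (simp add: algebra_simps)
    qed
    ultimately have "skew (f, n) x = cell_point E (frac (z x))"
      unfolding skew_def if_P[OF x01] E_def z_def by simp
    also have "\<dots> = x + (real E + of_int n * \<alpha> - of_int \<lfloor>z a\<rfloor>) / N"
      unfolding cell_point_def frac_def floor_z using card_carrier_pos by (simp add: z_def field_simps)
    finally show "skew (f, n) x = x + (real E + of_int n * \<alpha> - of_int \<lfloor>z a\<rfloor>) / N" .
  qed
qed

lemma skew_piecewise_translation:
  assumes f: "\<And>i. f i \<in> carrier G" and "finite (supp f)"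
  shows "piecewise_translation (skew (f, n))"
proof (rule piecewise_translationI[OF finite_breakpoints[OF assms(2)]])
  fix a b :: real
  assume "0 \<le> a" "a < b" "b \<le> 1" "{a<..<b} \<inter> breakpoints f n = {}"
  then show "\<exists>c. \<forall>x\<in>{a..<b}. skew (f, n) x = x + c"
    using skew_translation_between_breakpoints[of f a b n, OF f] by blast
qed

lemma skew_is_IET:
  assumes f: "\<And>i. f i \<in> carrier G" and "finite (supp f)"
  shows "is_IET (skew (f, n))"
proof -
  define g where "g i = inv (f (i + n))" for i
  have g: "\<And>i. g i \<in> carrier G" unfolding g_def using f by simp
  have "supp g \<subseteq> (\<lambda>i. i - n) ` supp f"
    unfolding supp_def g_def using f by (auto intro: image_eqI[where x = "_ + n"])
  then have "finite (supp g)" using assms(2) finite_subset by blast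
  have "skew (f, n) (skew (g, - n) x) = x" for x
    using skew_mult[OF f g assms(2) \<open>finite (supp g)\<close>, of n "- n" x] f skew_one
    by (simp add: g_def)
  moreover have "skew (g, - n) (skew (f, n) x) = x" for x
    using skew_mult[OF g f \<open>finite (supp g)\<close> assms(2), of "- n" n x] f skew_one
    by (simp add: g_def)
  ultimately have "bij_betw (skew (f, n)) {0..<1} {0..<1}"
    using skew_in_unit[of f, OF f] skew_in_unit[of g, OF g]
    by (intro bij_betw_byWitness[where f' = "skew (g, - n)"]) auto
  then show ?thesis
    unfolding is_IET_iff using skew_outside skew_piecewise_translation[OF assms] by blast
qed

lemma skew_eq_on_first_cell:
  assumes f: "\<And>i. f i \<in> carrier G" and g: "\<And>i. g i \<in> carrier G"
    and eq: "skew (f, n) = skew (g, m)" and t: "0 \<le> t" "t < 1"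
  shows "frac (t + of_int n * \<alpha>) = frac (t + of_int m * \<alpha>) \<and>
    cocycle f (t + of_int n * \<alpha>) = cocycle g (t + of_int m * \<alpha>)"
proof -
  define a where "a = cocycle f (t + of_int n * \<alpha>) \<otimes> elem 0"
  define b where "b = cocycle g (t + of_int m * \<alpha>) \<otimes> elem 0"
  have elem0: "elem 0 \<in> carrier G" using elem_closed[OF card_carrier_pos] .
  have ab: "a \<in> carrier G" "b \<in> carrier G"
    unfolding a_def b_def using cocycle_closed[of f, OF f] cocycle_closed[of g, OF g] elem0 by simp_all
  have "cell_point (index a) (frac (t + of_int n * \<alpha>)) = cell_point (index b) (frac (t + of_int m * \<alpha>))"
    using skew_cell_point[of f, OF f card_carrier_pos t, of n] skew_cell_point[of g, OF g card_carrier_pos t, of m]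
    unfolding eq a_def b_def by simp
  then have "index a = index b" "frac (t + of_int n * \<alpha>) = frac (t + of_int m * \<alpha>)"
    using cell_point_inj frac_ge_0 frac_lt_1 by blast+
  then have "a = b" using ab elem_index by metis
  then show ?thesis
    unfolding a_def b_def using \<open>frac _ = frac _\<close> cocycle_closed[of f, OF f] cocycle_closed[of g, OF g] elem0 by simp
qed

lemma skew_inj:
  assumes f: "\<And>i. f i \<in> carrier G" and g: "\<And>i. g i \<in> carrier G"
    and "finite (supp f)" "finite (supp g)"
    and eq: "skew (f, n) = skew (g, m)"
  shows "f = g \<and> n = m"
proof -
  note on_first_cell = skew_eq_on_first_cell[of f g, OF f g eq]
  have "frac (of_int n * \<alpha>) = frac (of_int m * \<alpha>)" using on_first_cell[of 0] by simp
  then have "of_int (n - m) * \<alpha> \<in> \<int>"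
    using frac_diff_eq by (simp add: algebra_simps)
  then have "n = m" using of_int_mult_irrational_notin_Ints[OF irrational, of "n - m"] by auto
  have "cocycle f w = cocycle g w" for w
  proof -
    define t where "t = frac (w - of_int n * \<alpha>)"
    have "w - (t + of_int n * \<alpha>) \<in> \<int>" unfolding t_def by (simp add: frac_def)
    then show ?thesis
      using on_first_cell[of t] \<open>n = m\<close> cocycle_periodic[of f, OF f] cocycle_periodic[of g, OF g]
      unfolding t_def by (simp add: frac_lt_1)
  qed
  then have "f = g" by (rule cocycle_inj[OF f g assms(3,4)])
  with \<open>n = m\<close> show ?thesis by simp
qed

lemma wreath_Z_carrier_iff: "(f, n) \<in> carrier (wreath_Z G) \<longleftrightarrow> (\<forall>i. f i \<in> carrier G) \<and> finite (supp f)"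
  by (simp add: wreath_Z_def supp_def)

lemma skew_hom: "skew \<in> hom (wreath_Z G) IET_group"
proof (rule homI)
  fix p assume "p \<in> carrier (wreath_Z G)"
  then obtain f n where "p = (f, n)" "\<And>i. f i \<in> carrier G" "finite (supp f)"
    using wreath_Z_carrier_iff by (cases p) auto
  then show "skew p \<in> carrier IET_group" unfolding IET_group_def using skew_is_IET by simp
next
  fix p q assume "p \<in> carrier (wreath_Z G)" "q \<in> carrier (wreath_Z G)"
  then obtain f n g m where p: "p = (f, n)" "\<And>i. f i \<in> carrier G" "finite (supp f)"
    and q: "q = (g, m)" "\<And>i. g i \<in> carrier G" "finite (supp g)"
    using wreath_Z_carrier_iff by (cases p, cases q) auto
  show "skew (p \<otimes>\<^bsub>wreath_Z G\<^esub> q) = skew p \<otimes>\<^bsub>IET_group\<^esub> skew q"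
    unfolding IET_group_def p q using skew_mult[OF p(2) q(2) p(3) q(3)] by (simp add: wreath_Z_def fun_eq_iff)
qed

lemma skew_inj_on: "inj_on skew (carrier (wreath_Z G))"
proof (rule inj_onI)
  fix p q assume "p \<in> carrier (wreath_Z G)" "q \<in> carrier (wreath_Z G)" "skew p = skew q"
  then obtain f n g m where "p = (f, n)" "\<And>i. f i \<in> carrier G" "finite (supp f)"
    and "q = (g, m)" "\<And>i. g i \<in> carrier G" "finite (supp g)" "skew (f, n) = skew (g, m)"
    using wreath_Z_carrier_iff by (cases p, cases q) auto
  then show "p = q" using skew_inj by blast
qed

end

theorem mainTheorem5:
  fixes A :: "('a, 'b) monoid_scheme"
  assumes "comm_group A" and "finite (carrier A)"
  shows "\<exists>h. h \<in> hom (wreath_Z A) IET_group \<and> inj_on h (carrier (wreath_Z A))"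
proof -
  obtain \<alpha> :: real where "\<alpha> \<notin> \<rat>" using ex_irrational by blast
  with assms interpret IET_wreath A \<alpha> by (simp add: IET_wreath_def IET_wreath_axioms_def)
  show ?thesis using skew_hom skew_inj_on by blast
qed

end
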